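(* Define $g(n)$ for $n\ge1$ greedily: $g(n)$ is the least positive integer such that $g(n)\notin\{g(1),\dots,g(n-1)\}$ and $g(n)-n\notin\{g(i)-i: 1\le i\le n-1\}$. Then $g(n)=f(n)$ for all $n\ge 1$. (Equivalently, $(f(n))_{n\ge1}$ is the lexicographically least sequence of distinct positive integers such that the integers $f(n)-n$, $n\ge1$, are pairwise distinct.)
   Context: $\mathbb{N}=\{0,1,2,\dots\}$. The sequence $f:\mathbb{N}\to\mathbb{N}$ is defined greedily: $f(0)=0$, and for $n\ge1$, $f(n)$ is the least natural number such that (i) $f(n)\notin\{f(0),f(1),\dots,f(n-1)\}$ and (ii) $\sum_{1\le i\le n} f(i)$ is divisible by $n$. *)

theory Defs
  imports Main
begin

text \<open>fseq n = [f(0), f(1), ..., f(n)] for the greedy sequence f of the paper: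
  f(0) = 0, and f(n) (n \<ge> 1) is the least natural number not among f(0..n-1)
  such that n divides f(1) + ... + f(n).\<close>
primrec fseq :: "nat \<Rightarrow> nat list" where
  "fseq 0 = [0]"
| "fseq (Suc n) =
     (let xs = fseq n
      in xs @ [LEAST v. v \<notin> set xs \<and> Suc n dvd (sum_list (tl xs) + v)])"

definition f :: "nat \<Rightarrow> nat" where
  "f n = fseq n ! n"

primrec gseq :: "nat \<Rightarrow> nat list" where
  "gseq 0 = []"
| "gseq (Suc n) =
     (let xs = gseq n
      in xs @ [LEAST v. 0 < v \<and> v \<notin> set xs \<and>
                 int v - int (Suc n) \<notin> {int (xs ! i) - int (Suc i) | i. i < n}])"

definition g :: "nat \<Rightarrow> nat" where
  "g n = gseq n ! (n - 1)"

end

theory Submission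
  imports Defs
begin

text \<open>
  After n steps of the f-rule the state is described by one number c: the sum f(1) + ... + f(n)
  equals n c, every value 1, ..., c - 1 is already taken, and the differences f(k) - k, 1 \<le> k \<le> n,
  fill exactly the interval [c - n, c - 1]. Divisibility by n + 1 then forces f(n + 1) \<equiv> c
  (mod n + 1), so f(n + 1) = c if c is still free and c + n + 1 otherwise (all earlier values lie
  below it); the state moves to c or c + 1. The g-rule makes the same choice: values below c are
  taken, and c + 1, ..., c + n are excluded because their difference with n + 1 lies in
  [c - n, c - 1], while c + n + 1 creates the new difference c.
\<close>

lemma length_fseq [simp]: "length (fseq n) = Suc n"
  by (induction n) (simp_all add: Let_def)

lemma nth_fseq: "k \<le> n \<Longrightarrow> fseq n ! k = f k"
proof (induction n)
  case 0
  then show ?case by (simp add: f_def)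
next
  case (Suc n)
  then show ?case
    by (cases "k = Suc n") (simp_all add: f_def Let_def nth_append)
qed

lemma set_fseq: "set (fseq n) = f ` {0..n}"
proof -
  have "set (fseq n) = {fseq n ! i | i. i < Suc n}"
    by (simp add: set_conv_nth)
  also have "\<dots> = f ` {0..n}"
    by (auto simp: nth_fseq less_Suc_eq_le) (metis nth_fseq)
  finally show ?thesis .
qed

lemma fseq_Suc: "fseq (Suc n) = fseq n @ [f (Suc n)]"
  by (simp add: f_def Let_def nth_append)

lemma sum_list_tl_fseq: "sum_list (tl (fseq n)) = (\<Sum>i=1..n. f i)"
proof (induction n)
  case 0
  then show ?case by simp
next
  case (Suc n)
  have "fseq n \<noteq> []"
    by (simp flip: length_greater_0_conv)
  with Suc show ?case
    by (simp del: fseq.simps add: fseq_Suc tl_append2)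
qed

lemma f_0: "f 0 = 0"
  by (simp add: f_def)

lemma f_Suc: "f (Suc n) = (LEAST v. v \<notin> f ` {0..n} \<and> Suc n dvd (\<Sum>i=1..n. f i) + v)"
  by (simp add: f_def Let_def nth_append set_fseq sum_list_tl_fseq)

lemma Suc_dvd_mult_add_imp_le:
  fixes n c v :: nat
  assumes "Suc n dvd n * c + v" and "v < c + Suc n"
  shows "v \<le> c"
proof (rule ccontr)
  assume "\<not> v \<le> c"
  then have "n * c + v = Suc n * c + (v - c)" by simp
  with assms(1) have "Suc n dvd v - c"
    by (metis dvd_add_right_iff dvd_triv_left)
  moreover have "0 < v - c" and "v - c < Suc n"
    using \<open>\<not> v \<le> c\<close> assms(2) by auto
  ultimately show False
    using nat_dvd_not_less by blast
qed

definition f_invariant :: "nat \<Rightarrow> nat \<Rightarrow> bool" where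
  "f_invariant n c \<longleftrightarrow> 1 \<le> c \<and> (\<Sum>i=1..n. f i) = n * c \<and> {1..<c} \<subseteq> f ` {1..n} \<and>
     (\<lambda>k. int (f k) - int k) ` {1..n} = {int c - int n .. int c - 1}"

lemma f_invariant_0: "f_invariant 0 1"
  by (simp add: f_invariant_def)

lemma f_less_of_invariant:
  assumes "f_invariant n c" and "k \<in> {1..n}"
  shows "f k < c + n"
proof -
  have "int (f k) - int k \<in> (\<lambda>k. int (f k) - int k) ` {1..n}"
    using assms(2) by blast
  then have "int (f k) - int k \<le> int c - 1"
    using assms(1) by (simp add: f_invariant_def)
  then show ?thesis
    using assms(2) by simp
qed

lemma f_Suc_of_invariant:
  assumes inv: "f_invariant n c"
  shows "f (Suc n) = (if c \<in> f ` {1..n} then c + n + 1 else c)"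
proof -
  have c_pos: "1 \<le> c" and sum: "(\<Sum>i=1..n. f i) = n * c" and low: "{1..<c} \<subseteq> f ` {1..n}"
    using inv by (simp_all add: f_invariant_def)
  have used: "f ` {0..n} = insert 0 (f ` {1..n})"
    unfolding atLeastAtMost_insertL[OF le0, symmetric] by (simp add: f_0)
  have below_used: "v \<in> f ` {0..n}" if "v < c" for v
    using that low used by (cases "v = 0") auto
  define P where "P v \<longleftrightarrow> v \<notin> f ` {0..n} \<and> Suc n dvd n * c + v" for v
  have f_eq: "f (Suc n) = (LEAST v. P v)"
    unfolding f_Suc sum P_def ..
  show ?thesis
  proof (cases "c \<in> f ` {1..n}")
    case True
    have "c + n + 1 \<notin> f ` {1..n}"
      using f_less_of_invariant[OF inv] by fastforce
    moreover have "Suc n dvd n * c + (c + n + 1)"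
      by (rule dvdI[of _ _ "c + 1"]) simp
    ultimately have "P (c + n + 1)"
      unfolding P_def used by simp
    moreover have "c + n + 1 \<le> v" if "P v" for v
    proof (rule ccontr)
      assume "\<not> c + n + 1 \<le> v"
      then have "v \<le> c"
        using \<open>P v\<close> Suc_dvd_mult_add_imp_le[of n c v] by (simp add: P_def)
      then have "v \<in> f ` {0..n}"
        using below_used True used by (cases "v = c") auto
      with \<open>P v\<close> show False by (simp add: P_def)
    qed
    ultimately show ?thesis
      using True f_eq by (simp add: Least_equality)
  next
    case False
    have "Suc n dvd n * c + c"
      by (rule dvdI[of _ _ c]) simp
    then have "P c"
      using False c_pos unfolding P_def used by simp
    moreover have "c \<le> v" if "P v" for v
      using that below_used by (meson P_def not_le)
    ultimately show ?thesis
      using False f_eq by (simp add: Least_equality)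
  qed
qed

lemma f_invariant_Suc:
  assumes inv: "f_invariant n c"
  shows "f_invariant (Suc n) (if c \<in> f ` {1..n} then c + 1 else c)"
proof -
  have c_pos: "1 \<le> c" and sum: "(\<Sum>i=1..n. f i) = n * c" and low: "{1..<c} \<subseteq> f ` {1..n}"
    and diffs: "(\<lambda>k. int (f k) - int k) ` {1..n} = {int c - int n .. int c - 1}"
    using inv by (simp_all add: f_invariant_def)
  have ivl: "{1..Suc n} = insert (Suc n) {1..n}" by auto
  then have used_mono: "f ` {1..n} \<subseteq> f ` {1..Suc n}" by auto
  show ?thesis
  proof (cases "c \<in> f ` {1..n}")
    case True
    then have f_eq: "f (Suc n) = c + n + 1"
      using f_Suc_of_invariant[OF inv] by simp
    have "{1..<c + 1} = insert c {1..<c}"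
      using c_pos by auto
    then have "{1..<c + 1} \<subseteq> f ` {1..Suc n}"
      using low True used_mono by auto
    moreover have "(\<lambda>k. int (f k) - int k) ` {1..Suc n} = insert (int c) {int c - int n .. int c - 1}"
      unfolding ivl using diffs f_eq by simp
    moreover have "insert (int c) {int c - int n .. int c - 1} = {int (c + 1) - int (Suc n) .. int (c + 1) - 1}"
      by auto
    ultimately show ?thesis
      using True sum f_eq by (simp add: f_invariant_def)
  next
    case False
    then have f_eq: "f (Suc n) = c"
      using f_Suc_of_invariant[OF inv] by simp
    have "(\<lambda>k. int (f k) - int k) ` {1..Suc n} = insert (int c - int (Suc n)) {int c - int n .. int c - 1}"
      unfolding ivl using diffs f_eq by simp
    moreover have "insert (int c - int (Suc n)) {int c - int n .. int c - 1} = {int c - int (Suc n) .. int c - 1}"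
      by auto
    ultimately show ?thesis
      using False c_pos sum low used_mono f_eq by (auto simp: f_invariant_def)
  qed
qed

lemma f_invariant_exists: "\<exists>c. f_invariant n c"
proof (induction n)
  case 0
  then show ?case using f_invariant_0 by blast
next
  case (Suc n)
  then show ?case using f_invariant_Suc by blast
qed

lemma f_Suc_g_rule:
  "f (Suc n) = (LEAST v. 0 < v \<and> v \<notin> f ` {1..n} \<and>
                  int v - int (Suc n) \<notin> (\<lambda>k. int (f k) - int k) ` {1..n})"
proof -
  obtain c where inv: "f_invariant n c"
    using f_invariant_exists by blast
  then have c_pos: "1 \<le> c" and low: "{1..<c} \<subseteq> f ` {1..n}"
    and diffs: "(\<lambda>k. int (f k) - int k) ` {1..n} = {int c - int n .. int c - 1}"
    by (simp_all add: f_invariant_def)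
  define P where "P v \<longleftrightarrow> 0 < v \<and> v \<notin> f ` {1..n} \<and> int v - int (Suc n) \<notin> {int c - int n .. int c - 1}"
    for v
  have below: "\<not> P v" if "v < c" for v
    using that low by (cases "v = 0") (auto simp: P_def)
  show ?thesis
    unfolding diffs P_def[symmetric]
  proof (cases "c \<in> f ` {1..n}")
    case True
    have "c + n + 1 \<notin> f ` {1..n}"
      using f_less_of_invariant[OF inv] by fastforce
    then have "P (c + n + 1)"
      by (simp add: P_def)
    moreover have "c + n + 1 \<le> v" if "P v" for v
    proof (rule ccontr)
      assume "\<not> c + n + 1 \<le> v"
      moreover have "c \<le> v" and "v \<noteq> c"
        using that below[of v] True by (auto simp: P_def)
      ultimately have "int v - int (Suc n) \<in> {int c - int n .. int c - 1}"
        by simp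
      with that show False
        by (simp add: P_def)
    qed
    ultimately show "f (Suc n) = (LEAST v. P v)"
      using True f_Suc_of_invariant[OF inv] by (simp add: Least_equality)
  next
    case False
    then have "P c"
      using c_pos by (simp add: P_def)
    moreover have "c \<le> v" if "P v" for v
      using that below by (meson not_le)
    ultimately show "f (Suc n) = (LEAST v. P v)"
      using False f_Suc_of_invariant[OF inv] by (simp add: Least_equality)
  qed
qed

lemma gseq_eq_map_f: "gseq n = map f [1..<Suc n]"
proof (induction n)
  case 0
  then show ?case by simp
next
  case (Suc n)
  have used: "set (map f [1..<Suc n]) = f ` {1..n}"
    by auto
  have "{int (map f [1..<Suc n] ! i) - int (Suc i) | i. i < n} =
      (\<lambda>i. int (f (Suc i)) - int (Suc i)) ` {..<n}"
    by (force simp del: upt_Suc)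
  also have "\<dots> = (\<lambda>k. int (f k) - int k) ` {1..n}"
    unfolding image_Suc_lessThan[symmetric] image_image ..
  finally have "gseq (Suc n) = map f [1..<Suc n] @ [f (Suc n)]"
    by (simp only: gseq.simps Let_def Suc.IH used f_Suc_g_rule[symmetric])
  then show ?case by simp
qed

theorem mainTheorem3:
  fixes n :: nat
  assumes "1 \<le> n"
  shows "g n = f n"
  using assms by (simp add: g_def gseq_eq_map_f del: upt_Suc)

end
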